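(* Let $\nu_0$ be a probability measure on $[0,1]$ with $\nu_0((\frac12,1])>0$. Then there exists $k\in\mathbb{N}$ such that the following holds whenever $W>1$ and $(W-1)/\sigma_W$ (with $\sigma_W>0$) are large enough: if $\tilde\nu_0$ is the probability measure on pairs $(p,\varepsilon)$ whose $p$-marginal is $\nu_0$ and whose conditional law of $\varepsilon$ given $p$ is the Gaussian $\mathcal{N}(0,\sigma_W^2)$ truncated to the interval $(a(p),b(p))$ with $a(p)=-(W-1)p$, $b(p)=(W-1)(1-p)$, and $\mu$ is any probability measure on $([0,1]\times\mathbb{R})^{\mathbb{N}}$ with $\mu\ll\mu_0:=\prod_{n=1}^\infty\tilde\nu_0$, then $\mu(\mathcal{C}_I^w)=1$.
   Context: For a sequence $((p_i,\varepsilon_i))_{i=1}^\infty$ define weights $w_i:=1+(W-1)p_i^k+\varepsilon_i$ (so $w_i\in[1,W]$ under the truncation above). Let $X_1,X_2,\dots$ be independent random variables with values in $\{-1,+1\}$ and $\mathbb{P}(X_i=1)=p_i$. $\mathcal{C}_I^w$ is the set of sequences $((p_i,\varepsilon_i))_{i=1}^\infty$ for which the weighted Condorcet Jury Property holds: $\lim_{n\to\infty}\mathbb{P}\left(\sum_{i=1}^n w_iX_i>0\right)=1$. $\mu\ll\mu_0$ denotes absolute continuity. *)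

theory Defs
  imports "HOL-Probability.Probability"
begin

definition weight :: "real \<Rightarrow> nat \<Rightarrow> real \<times> real \<Rightarrow> real" where
  "weight W k pe = 1 + (W - 1) * (fst pe) ^ k + snd pe"

definition weighted_majority_prob :: "real \<Rightarrow> nat \<Rightarrow> (nat \<Rightarrow> real \<times> real) \<Rightarrow> nat \<Rightarrow> real" where
  "weighted_majority_prob W k s n =
     measure_pmf.prob (Pi_pmf {..<n} False (\<lambda>i. bernoulli_pmf (fst (s i))))
       {x. (\<Sum>i<n. weight W k (s i) * (if x i then 1 else -1)) > 0}"

definition CJP_weighted :: "real \<Rightarrow> nat \<Rightarrow> (nat \<Rightarrow> real \<times> real) set" where
  "CJP_weighted W k = {s. (weighted_majority_prob W k s \<longlonglongrightarrow> 1)}"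

definition trunc_normal_density :: "real \<Rightarrow> real \<Rightarrow> real \<Rightarrow> real \<Rightarrow> real" where
  "trunc_normal_density \<sigma> a b x =
     indicator {a<..<b} x * normal_density 0 \<sigma> x /
       integral\<^sup>L lborel (\<lambda>y. indicator {a<..<b} y * normal_density 0 \<sigma> y)"

definition pair_law :: "real measure \<Rightarrow> real \<Rightarrow> real \<Rightarrow> (real \<times> real) measure" where
  "pair_law \<nu>0 W \<sigma> = density (\<nu>0 \<Otimes>\<^sub>M lborel)
     (\<lambda>(p, e). ennreal (trunc_normal_density \<sigma> (-(W - 1) * p) ((W - 1) * (1 - p)) e))"

definition mu0 :: "real measure \<Rightarrow> real \<Rightarrow> real \<Rightarrow> (nat \<Rightarrow> real \<times> real) measure" where
  "mu0 \<nu>0 W \<sigma> = PiM UNIV (\<lambda>_. pair_law \<nu>0 W \<sigma>)"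

end

theory Submission
  imports Defs
begin

text \<open>Given \<open>(p, \<epsilon>)\<close>, a vote \<open>w X\<close> has conditional mean \<open>w (2 p - 1)\<close>, the vote drift.
  Since the truncated Gaussian has absolute first moment \<open>O(\<sigma>)\<close>, the drift has mean at least
  \<open>-1 + (W - 1) c\<^sub>k - 6 \<sigma>\<close> under the pair law, where \<open>c\<^sub>k = \<integral> p\<^sup>k (2 p - 1) d\<nu>\<^sub>0\<close> is
  positive for large \<open>k\<close> because \<open>\<nu>\<^sub>0\<close> charges \<open>(1/2, 1]\<close>; so the mean drift \<open>m\<close> is positive
  once \<open>W\<close> and \<open>(W - 1) / \<sigma>\<close> are large. Under \<open>\<mu>\<^sub>0\<close> the pairs are i.i.d. with drifts bounded
  by \<open>2 W\<close>, so Hoeffding's inequality and Borel--Cantelli make the drift sums eventually exceed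
  \<open>n m / 2\<close> almost surely. For such a sequence, Hoeffding's inequality for the independent votes
  makes the probability of a wrong majority decay geometrically, which is the Condorcet property.
  Absolute continuity transfers the almost sure statement from \<open>\<mu>\<^sub>0\<close> to \<open>\<mu>\<close>.\<close>

section \<open>Truncated normal densities\<close>

lemma trunc_normal_density_nonneg: "0 \<le> trunc_normal_density \<sigma> a b x"
  unfolding trunc_normal_density_def
  by (intro divide_nonneg_nonneg mult_nonneg_nonneg integral_nonneg_AE) (auto simp: indicator_def)

lemma integrable_indicator_normal_density:
  "\<sigma> > 0 \<Longrightarrow> integrable lborel (\<lambda>y. indicator {a<..<b} y * normal_density \<mu> \<sigma> y)"
  using integrable_real_mult_indicator[of "{a<..<b}" lborel "normal_density \<mu> \<sigma>"]
  by (simp add: mult.commute)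

lemma normal_density_ge_within_sd:
  assumes "\<sigma> > 0" "\<bar>y\<bar> \<le> \<sigma>"
  shows "normal_density 0 \<sigma> y \<ge> exp (-1/2) / (\<sigma> * sqrt (2 * pi))"
proof -
  have "y\<^sup>2 \<le> \<sigma>\<^sup>2"
    using assms by (metis abs_le_square_iff abs_of_pos)
  with assms have "exp (-1/2) \<le> exp (- y\<^sup>2 / (2 * \<sigma>\<^sup>2))"
    by (simp add: field_simps)
  moreover have "sqrt (2 * pi * \<sigma>\<^sup>2) = \<sigma> * sqrt (2 * pi)"
    using assms by (simp add: real_sqrt_mult mult.commute)
  ultimately show ?thesis
    unfolding normal_density_def using assms by (simp add: divide_right_mono)
qed

lemma normal_mass_Ioo_ge:
  assumes \<sigma>: "\<sigma> > 0" and ab: "a \<le> 0" "0 \<le> b" "\<sigma> \<le> b \<or> a \<le> -\<sigma>"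
  shows "(\<integral>y. indicator {a<..<b} y * normal_density 0 \<sigma> y \<partial>lborel) \<ge> 1/6"
proof -
  define c where "c = (if \<sigma> \<le> b then 0 else -\<sigma>)"
  have c: "{c<..<c + \<sigma>} \<subseteq> {a<..<b}" "{c<..<c + \<sigma>} \<subseteq> {-\<sigma>..\<sigma>}"
    using ab \<sigma> by (auto simp: c_def)
  define m where "m = exp (-1/2) / (\<sigma> * sqrt (2 * pi))"
  have "1/6 \<le> exp (-1/2) / sqrt (2 * pi)"
  proof -
    have "sqrt (2 * pi) \<le> sqrt (3\<^sup>2)"
      using pi_less_4 by (intro real_sqrt_le_mono) simp
    moreover have "1 + (-1/2) \<le> exp (-1/2::real)"
      by (rule exp_ge_add_one_self)
    ultimately show ?thesis by (simp add: field_simps)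
  qed
  also have "\<dots> = (\<integral>y. indicator {c<..<c + \<sigma>} y * m \<partial>lborel)"
    using \<sigma> by (simp add: m_def)
  also have "\<dots> \<le> (\<integral>y. indicator {a<..<b} y * normal_density 0 \<sigma> y \<partial>lborel)"
  proof (rule integral_mono)
    show "integrable lborel (\<lambda>y. indicator {c<..<c + \<sigma>} y * m)"
      using \<sigma> by (intro integrable_mult_left integrable_real_indicator) auto
    show "indicator {c<..<c + \<sigma>} y * m \<le> indicator {a<..<b} y * normal_density 0 \<sigma> y" for y
      using c normal_density_ge_within_sd[OF \<sigma>, of y]
      by (auto simp: indicator_def m_def subset_iff abs_le_iff)
  qed (rule integrable_indicator_normal_density[OF \<sigma>])
  finally show ?thesis .
qed

lemma
  assumes \<sigma>: "\<sigma> > 0"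
    and Z: "(\<integral>y. indicator {a<..<b} y * normal_density 0 \<sigma> y \<partial>lborel) > 0"
  shows integrable_trunc_normal_density: "integrable lborel (trunc_normal_density \<sigma> a b)"
    and integral_trunc_normal_density: "integral\<^sup>L lborel (trunc_normal_density \<sigma> a b) = 1"
    and nn_integral_trunc_normal_density: "(\<integral>\<^sup>+x. trunc_normal_density \<sigma> a b x \<partial>lborel) = 1"
proof -
  show i: "integrable lborel (trunc_normal_density \<sigma> a b)"
    unfolding trunc_normal_density_def by (intro integrable_divide_zero integrable_indicator_normal_density \<sigma>)
  show "integral\<^sup>L lborel (trunc_normal_density \<sigma> a b) = 1"
    unfolding trunc_normal_density_def using Z by simp
  then show "(\<integral>\<^sup>+x. trunc_normal_density \<sigma> a b x \<partial>lborel) = 1"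
    by (subst nn_integral_eq_integral[OF i]) (auto simp: trunc_normal_density_nonneg)
qed

lemma
  assumes \<sigma>: "\<sigma> > 0"
    and Z: "(\<integral>y. indicator {a<..<b} y * normal_density 0 \<sigma> y \<partial>lborel) = Z" "Z > 0"
  shows integrable_trunc_normal_abs_moment:
      "integrable lborel (\<lambda>x. trunc_normal_density \<sigma> a b x * \<bar>x\<bar>)"
    and trunc_normal_abs_moment_le:
      "(\<integral>x. trunc_normal_density \<sigma> a b x * \<bar>x\<bar> \<partial>lborel) \<le> \<sigma> / Z"
proof -
  have bound_int: "integrable lborel (\<lambda>x. normal_density 0 \<sigma> x * \<bar>x\<bar> / Z)"
    using integrable_normal_moment_abs[OF \<sigma>, of 0 1] by simp
  have le: "trunc_normal_density \<sigma> a b x * \<bar>x\<bar> \<le> normal_density 0 \<sigma> x * \<bar>x\<bar> / Z" for x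
    unfolding trunc_normal_density_def Z(1) using Z(2)
    by (auto simp: indicator_def divide_right_mono)
  show i: "integrable lborel (\<lambda>x. trunc_normal_density \<sigma> a b x * \<bar>x\<bar>)"
  proof (rule Bochner_Integration.integrable_bound[OF bound_int])
    show "(\<lambda>x. trunc_normal_density \<sigma> a b x * \<bar>x\<bar>) \<in> borel_measurable lborel"
      unfolding trunc_normal_density_def by measurable
    show "AE x in lborel. norm (trunc_normal_density \<sigma> a b x * \<bar>x\<bar>) \<le> norm (normal_density 0 \<sigma> x * \<bar>x\<bar> / Z)"
      using le Z(2) by (auto simp: trunc_normal_density_nonneg)
  qed
  have "(\<integral>x. trunc_normal_density \<sigma> a b x * \<bar>x\<bar> \<partial>lborel) \<le> (\<integral>x. normal_density 0 \<sigma> x * \<bar>x\<bar> / Z \<partial>lborel)"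
    by (intro integral_mono i bound_int le)
  also have "\<dots> = \<sigma> * sqrt (2 / pi) / Z"
    using integral_normal_moment_abs_odd[OF \<sigma>, of 0 0] by simp
  also have "\<dots> \<le> \<sigma> / Z"
    using \<sigma> Z(2) pi_gt3 by (intro divide_right_mono mult_left_le) auto
  finally show "(\<integral>x. trunc_normal_density \<sigma> a b x * \<bar>x\<bar> \<partial>lborel) \<le> \<sigma> / Z" .
qed

section \<open>Competence moments\<close>

lemma emeasure_Ioc_shrink_left:
  fixes a b :: real
  assumes sets: "sets N = sets borel" and pos: "emeasure N {a<..b} > 0"
  shows "\<exists>c>a. emeasure N {c<..b} > 0"
proof (rule ccontr)
  assume "\<not> ?thesis"
  then have "emeasure N (\<Union>n. {a + 1 / Suc n<..b}) = 0"
    by (intro emeasure_UN_eq_0) (auto simp: sets)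
  moreover have "{a<..b} \<subseteq> (\<Union>n. {a + 1 / Suc n<..b})"
  proof
    fix x assume x: "x \<in> {a<..b}"
    then obtain n where "inverse (real (Suc n)) < x - a"
      using reals_Archimedean[of "x - a"] by auto
    with x show "x \<in> (\<Union>n. {a + 1 / Suc n<..b})"
      by (auto simp: field_simps)
  qed
  moreover have "(\<Union>n. {a + 1 / Suc n<..b}) \<in> sets N"
    unfolding sets by measurable
  ultimately have "emeasure N {a<..b} = 0"
    by (rule emeasure_eq_0[rotated 1])
  with pos show False by simp
qed

lemma competence_ge_step_function:
  fixes c p :: real
  assumes c: "c > 1/2" and p: "0 \<le> p" "p \<le> 1"
  shows "c ^ k * (2 * c - 1) * indicator {c<..1} p - (1/2) ^ k \<le> p ^ k * (2 * p - 1)"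
proof (cases "c < p")
  case True
  then have "c ^ k * (2 * c - 1) \<le> p ^ k * (2 * p - 1)"
    using c by (intro mult_mono power_mono) auto
  moreover have "c ^ k * (2 * c - 1) * indicator {c<..1} p = c ^ k * (2 * c - 1)"
    using True p by simp
  moreover have "0 \<le> ((1/2) ^ k :: real)" by simp
  ultimately show ?thesis by linarith
next
  case False
  have "- ((1/2) ^ k) \<le> p ^ k * (2 * p - 1)"
  proof (cases "p < 1/2")
    case True
    then have "p ^ k \<le> (1/2) ^ k" using p by (intro power_mono) auto
    moreover have "- (p ^ k) \<le> p ^ k * (2 * p - 1)" using p by (simp add: algebra_simps)
    ultimately show ?thesis by linarith
  next
    case False
    then have "0 \<le> p ^ k * (2 * p - 1)" using p by simp
    moreover have "0 \<le> ((1/2) ^ k :: real)" by simp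
    ultimately show ?thesis by linarith
  qed
  then show ?thesis using False by simp
qed

definition competence_moment :: "real measure \<Rightarrow> nat \<Rightarrow> real" where
  "competence_moment N k = (\<integral>p. p ^ k * (2 * p - 1) \<partial>N)"

locale unit_interval_prob_space = prob_space N for N :: "real measure" +
  assumes sets_eq_borel: "sets N = sets borel"
    and emeasure_unit_interval: "emeasure N {0..1} = 1"
begin

lemma measurable_from_borel: "f \<in> borel_measurable borel \<Longrightarrow> f \<in> borel_measurable N"
  using measurable_cong_sets[OF sets_eq_borel refl] by blast

lemma AE_unit_interval: "AE p in N. 0 \<le> p \<and> p \<le> 1"
  using AE_prob_1[of "{0..1}"] emeasure_unit_interval by (simp add: emeasure_eq_measure)

lemma integrable_bounded_on_unit_interval:
  fixes f :: "real \<Rightarrow> real"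
  assumes "f \<in> borel_measurable borel" "\<And>p. 0 \<le> p \<Longrightarrow> p \<le> 1 \<Longrightarrow> \<bar>f p\<bar> \<le> B"
  shows "integrable N f"
  using assms by (intro integrable_const_bound[where B=B] measurable_from_borel
      eventually_mono[OF AE_unit_interval]) auto

lemma integrable_competence:
  "integrable N (\<lambda>p. p ^ k * (2 * p - 1))"
proof (rule integrable_bounded_on_unit_interval[where B=1])
  fix p :: real assume "0 \<le> p" "p \<le> 1"
  then show "\<bar>p ^ k * (2 * p - 1)\<bar> \<le> 1"
    unfolding abs_mult by (intro mult_le_one) (auto intro: power_le_one)
qed simp

lemma competence_moment_ge:
  assumes c: "c > 1/2"
  shows "c ^ k * (2 * c - 1) * measure N {c<..1} - (1/2) ^ k \<le> competence_moment N k"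
proof -
  have "c ^ k * (2 * c - 1) * measure N {c<..1} - (1/2) ^ k
      = (\<integral>p. c ^ k * (2 * c - 1) * indicator {c<..1} p - (1/2) ^ k \<partial>N)"
    by (subst Bochner_Integration.integral_diff)
      (auto simp: sets_eq_borel emeasure_eq_measure prob_space)
  also have "\<dots> \<le> competence_moment N k"
    unfolding competence_moment_def using c
    by (intro integral_mono_AE integrable_competence eventually_mono[OF AE_unit_interval]
        competence_ge_step_function Bochner_Integration.integrable_diff integrable_mult_right
        integrable_real_indicator) (auto simp: sets_eq_borel emeasure_eq_measure)
  finally show ?thesis .
qed

lemma ex_competence_moment_pos:
  assumes "emeasure N {1/2<..1} > 0"
  shows "\<exists>k\<ge>1. competence_moment N k > 0"
proof -
  obtain c where c: "c > 1/2" "emeasure N {c<..1} > 0"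
    using emeasure_Ioc_shrink_left[OF sets_eq_borel assms] by blast
  define d where "d = (2 * c - 1) * measure N {c<..1}"
  have d: "d > 0"
    using c by (simp add: d_def emeasure_eq_measure)
  obtain n where n: "1 / d < (2 * c) ^ n"
    using real_arch_pow[of "2 * c" "1 / d"] c by auto
  also have "\<dots> \<le> (2 * c) ^ Suc n"
    using c by (intro power_increasing) auto
  finally have "1 < 2 ^ Suc n * (c ^ Suc n * d)"
    using d by (simp add: field_simps)
  then have "(1/2) ^ Suc n < c ^ Suc n * d"
    by (simp add: field_simps)
  then have "competence_moment N (Suc n) > 0"
    using competence_moment_ge[OF c(1), of "Suc n"] by (simp add: d_def mult.assoc)
  then show ?thesis by (intro exI[of _ "Suc n"]) auto
qed

end

section \<open>The law of a single voter\<close>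

definition pair_density :: "real \<Rightarrow> real \<Rightarrow> real \<times> real \<Rightarrow> real" where
  "pair_density W \<sigma> x = trunc_normal_density \<sigma> (-(W - 1) * fst x) ((W - 1) * (1 - fst x)) (snd x)"

definition admissible_pairs :: "real \<Rightarrow> (real \<times> real) set" where
  "admissible_pairs W =
     {x. 0 \<le> fst x \<and> fst x \<le> 1 \<and> -(W - 1) * fst x < snd x \<and> snd x < (W - 1) * (1 - fst x)}"

text \<open>The conditional mean of \<open>w X\<close> given \<open>(p, \<epsilon>)\<close>, since \<open>E X = 2 p - 1\<close>.\<close>
definition vote_drift :: "real \<Rightarrow> nat \<Rightarrow> real \<times> real \<Rightarrow> real" where
  "vote_drift W k x = weight W k x * (2 * fst x - 1)"

lemma pair_density_nonneg: "0 \<le> pair_density W \<sigma> x"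
  unfolding pair_density_def by (rule trunc_normal_density_nonneg)

lemma pair_density_measurable: "pair_density W \<sigma> \<in> borel_measurable (borel \<Otimes>\<^sub>M borel)"
proof -
  have indicator_Ioo: "indicator {a<..<b} y = (if a < y \<and> y < b then 1 else (0::real))" for a b y :: real
    by (auto simp: indicator_def)
  have "(\<lambda>(p, y). (if -(W - 1) * p < y \<and> y < (W - 1) * (1 - p) then 1 else 0) * normal_density 0 \<sigma> y)
      \<in> borel_measurable (borel \<Otimes>\<^sub>M lborel)"
    by (simp cong: measurable_cong_sets sets_pair_measure_cong)
  then have "(\<lambda>p. \<integral>y. (if -(W - 1) * p < y \<and> y < (W - 1) * (1 - p) then 1 else 0) * normal_density 0 \<sigma> y \<partial>lborel)
      \<in> borel_measurable borel"
    using lborel.borel_measurable_lebesgue_integral by simp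
  then show ?thesis
    unfolding pair_density_def trunc_normal_density_def indicator_Ioo by measurable
qed

lemma abs_weight_le:
  assumes W: "W > 1" and x: "x \<in> admissible_pairs W"
  shows "\<bar>weight W k x\<bar> \<le> 2 * W"
proof -
  obtain p e where x_eq: "x = (p, e)" by (cases x)
  have p: "0 \<le> p" "p \<le> 1" and e: "-(W - 1) * p < e" "e < (W - 1) * (1 - p)"
    using x by (auto simp: admissible_pairs_def x_eq)
  have "0 \<le> (W - 1) * p ^ k" "(W - 1) * p ^ k \<le> W - 1"
    using p W by (auto intro: mult_left_le power_le_one)
  moreover have "(W - 1) * p \<le> W - 1" "(W - 1) * (1 - p) \<le> W - 1"
    using p W by (auto intro: mult_left_le)
  ultimately show ?thesis
    using e W unfolding weight_def x_eq abs_le_iff by (simp add: algebra_simps)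
qed

lemma abs_vote_drift_le:
  assumes "W > 1" "x \<in> admissible_pairs W"
  shows "\<bar>vote_drift W k x\<bar> \<le> 2 * W"
proof -
  have "\<bar>2 * fst x - 1\<bar> \<le> 1"
    using assms(2) by (auto simp: admissible_pairs_def)
  then have "\<bar>weight W k x\<bar> * \<bar>2 * fst x - 1\<bar> \<le> 2 * W * 1"
    using abs_weight_le[OF assms, of k] assms(1) by (intro mult_mono) auto
  then show ?thesis
    by (simp add: vote_drift_def abs_mult)
qed

locale truncated_pair_law = unit_interval_prob_space \<nu>0 for \<nu>0 :: "real measure" +
  fixes W \<sigma> :: real
  assumes W_gt_1: "W > 1" and \<sigma>_pos: "\<sigma> > 0" and two_\<sigma>_le: "2 * \<sigma> \<le> W - 1"
begin

lemma pair_law_eq_density: "pair_law \<nu>0 W \<sigma> = density (\<nu>0 \<Otimes>\<^sub>M lborel) (pair_density W \<sigma>)"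
  unfolding pair_law_def pair_density_def by (simp add: case_prod_beta')

lemma sets_pair_borel: "sets (\<nu>0 \<Otimes>\<^sub>M lborel) = sets (borel \<Otimes>\<^sub>M borel)"
  using sets_pair_measure_cong[OF sets_eq_borel sets_lborel] .

lemma sets_pair_law: "sets (pair_law \<nu>0 W \<sigma>) = sets (borel \<Otimes>\<^sub>M borel)"
  unfolding pair_law_eq_density sets_density by (rule sets_pair_borel)

lemma measurable_pair_density [measurable]:
  "pair_density W \<sigma> \<in> borel_measurable (\<nu>0 \<Otimes>\<^sub>M lborel)"
  using pair_density_measurable measurable_cong_sets[OF sets_pair_borel refl] by blast

lemma measurable_vote_drift [measurable]:
  "vote_drift W k \<in> borel_measurable (\<nu>0 \<Otimes>\<^sub>M lborel)"
  "vote_drift W k \<in> borel_measurable (pair_law \<nu>0 W \<sigma>)"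
proof -
  have "vote_drift W k \<in> borel_measurable (borel \<Otimes>\<^sub>M borel)"
    unfolding vote_drift_def weight_def by measurable
  then show "vote_drift W k \<in> borel_measurable (\<nu>0 \<Otimes>\<^sub>M lborel)"
    "vote_drift W k \<in> borel_measurable (pair_law \<nu>0 W \<sigma>)"
    using measurable_cong_sets[OF sets_pair_borel refl] measurable_cong_sets[OF sets_pair_law refl]
    by blast+
qed

interpretation pair_sigma_finite \<nu>0 lborel ..

lemma normal_mass_ge:
  assumes "0 \<le> p" "p \<le> 1"
  shows "(\<integral>y. indicator {-(W - 1) * p<..<(W - 1) * (1 - p)} y * normal_density 0 \<sigma> y \<partial>lborel) \<ge> 1/6"
proof (rule normal_mass_Ioo_ge[OF \<sigma>_pos])
  show "\<sigma> \<le> (W - 1) * (1 - p) \<or> -(W - 1) * p \<le> - \<sigma>"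
  proof (cases "p \<le> 1/2")
    case True
    then have "(W - 1) * (1/2) \<le> (W - 1) * (1 - p)"
      using W_gt_1 by (intro mult_left_mono) auto
    then show ?thesis using two_\<sigma>_le by auto
  next
    case False
    then have "(W - 1) * (1/2) \<le> (W - 1) * p"
      using W_gt_1 by (intro mult_left_mono) auto
    then show ?thesis using two_\<sigma>_le by (simp add: field_simps)
  qed
qed (use assms W_gt_1 in \<open>auto intro: mult_nonpos_nonneg\<close>)

lemma nn_integral_pair_density:
  assumes "0 \<le> p" "p \<le> 1"
  shows "(\<integral>\<^sup>+e. pair_density W \<sigma> (p, e) \<partial>lborel) = 1"
  unfolding pair_density_def using nn_integral_trunc_normal_density[OF \<sigma>_pos] normal_mass_ge[OF assms]
  by simp

lemma prob_space_pair_law: "prob_space (pair_law \<nu>0 W \<sigma>)"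
proof (rule prob_spaceI)
  have "emeasure (pair_law \<nu>0 W \<sigma>) (space (pair_law \<nu>0 W \<sigma>)) = (\<integral>\<^sup>+x. pair_density W \<sigma> x \<partial>(\<nu>0 \<Otimes>\<^sub>M lborel))"
    unfolding pair_law_eq_density
    by (subst emeasure_density) (auto intro!: nn_integral_cong simp: space_pair_measure)
  also have "\<dots> = (\<integral>\<^sup>+p. \<integral>\<^sup>+e. pair_density W \<sigma> (p, e) \<partial>lborel \<partial>\<nu>0)"
    by (rule lborel.nn_integral_fst[symmetric]) measurable
  also have "\<dots> = (\<integral>\<^sup>+p. 1 \<partial>\<nu>0)"
    by (intro nn_integral_cong_AE eventually_mono[OF AE_unit_interval]) (auto simp: nn_integral_pair_density)
  finally show "emeasure (pair_law \<nu>0 W \<sigma>) (space (pair_law \<nu>0 W \<sigma>)) = 1"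
    by (simp add: emeasure_space_1)
qed

lemma AE_pair_law_admissible: "AE x in pair_law \<nu>0 W \<sigma>. x \<in> admissible_pairs W"
proof -
  have "AE x in \<nu>0 \<Otimes>\<^sub>M lborel. 0 < pair_density W \<sigma> x \<longrightarrow> x \<in> admissible_pairs W"
  proof (rule AE_pair_measure)
    show "{x \<in> space (\<nu>0 \<Otimes>\<^sub>M lborel). 0 < pair_density W \<sigma> x \<longrightarrow> x \<in> admissible_pairs W}
        \<in> sets (\<nu>0 \<Otimes>\<^sub>M lborel)"
      unfolding admissible_pairs_def using sets_eq_borel by measurable
    show "AE p in \<nu>0. AE e in lborel. 0 < pair_density W \<sigma> (p, e) \<longrightarrow> (p, e) \<in> admissible_pairs W"
      by (intro eventually_mono[OF AE_unit_interval] AE_I2)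
        (auto simp: pair_density_def trunc_normal_density_def admissible_pairs_def indicator_def)
  qed
  then show ?thesis
    unfolding pair_law_eq_density by (subst AE_density) auto
qed

lemma integrable_vote_drift: "integrable (pair_law \<nu>0 W \<sigma>) (vote_drift W k)"
  using prob_space_pair_law
  by (intro finite_measure.integrable_const_bound[where B="2 * W"] prob_space.finite_measure
      eventually_mono[OF AE_pair_law_admissible])
    (auto simp: abs_vote_drift_le[OF W_gt_1])

lemma cond_vote_drift_ge:
  assumes p: "0 \<le> p" "p \<le> 1"
  shows "(1 + (W - 1) * p ^ k) * (2 * p - 1) - 6 * \<sigma>
    \<le> (\<integral>e. pair_density W \<sigma> (p, e) * vote_drift W k (p, e) \<partial>lborel)"
proof -
  define t where "t = pair_density W \<sigma> \<circ> Pair p"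
  define Z where "Z = (\<integral>y. indicator {-(W - 1) * p<..<(W - 1) * (1 - p)} y * normal_density 0 \<sigma> y \<partial>lborel)"
  have Z: "Z \<ge> 1/6" unfolding Z_def by (rule normal_mass_ge[OF p])
  have [measurable]: "t \<in> borel_measurable lborel"
    unfolding t_def comp_def measurable_lborel2 by (rule measurable_Pair2[OF pair_density_measurable]) simp
  have t_int: "integrable lborel t" and t_int1: "integral\<^sup>L lborel t = 1"
    using integrable_trunc_normal_density[OF \<sigma>_pos] integral_trunc_normal_density[OF \<sigma>_pos] Z
    by (auto simp: t_def pair_density_def comp_def Z_def)
  have tabs_int: "integrable lborel (\<lambda>e. t e * \<bar>e\<bar>)"
    and tabs_le: "(\<integral>e. t e * \<bar>e\<bar> \<partial>lborel) \<le> \<sigma> / Z"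
    using integrable_trunc_normal_abs_moment[OF \<sigma>_pos Z_def[symmetric]]
      trunc_normal_abs_moment_le[OF \<sigma>_pos Z_def[symmetric]] Z
    by (auto simp: t_def pair_density_def comp_def)
  have "\<sigma> / Z \<le> 6 * \<sigma>"
    using Z \<sigma>_pos by (simp add: field_simps)
  have te_int: "integrable lborel (\<lambda>e. t e * e)"
  proof (rule Bochner_Integration.integrable_bound[OF tabs_int])
    show "(\<lambda>e. t e * e) \<in> borel_measurable lborel" by measurable
  qed (auto simp: t_def pair_density_nonneg abs_mult)
  have "\<bar>\<integral>e. t e * e \<partial>lborel\<bar> \<le> (\<integral>e. t e * \<bar>e\<bar> \<partial>lborel)"
    using integral_abs_bound[of lborel "\<lambda>e. t e * e"]
    by (simp add: abs_mult t_def pair_density_nonneg)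
  with tabs_le \<open>\<sigma> / Z \<le> 6 * \<sigma>\<close> have bound: "\<bar>(2 * p - 1) * (\<integral>e. t e * e \<partial>lborel)\<bar> \<le> 1 * (6 * \<sigma>)"
    unfolding abs_mult using p by (intro mult_mono) auto
  have "(\<integral>e. pair_density W \<sigma> (p, e) * vote_drift W k (p, e) \<partial>lborel)
      = (\<integral>e. (1 + (W - 1) * p ^ k) * (2 * p - 1) * t e + (2 * p - 1) * (t e * e) \<partial>lborel)"
    by (intro Bochner_Integration.integral_cong) (simp_all add: t_def vote_drift_def weight_def algebra_simps)
  also have "\<dots> = (1 + (W - 1) * p ^ k) * (2 * p - 1) * integral\<^sup>L lborel t + (2 * p - 1) * (\<integral>e. t e * e \<partial>lborel)"
    using t_int te_int by simp
  finally show ?thesis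
    using bound t_int1 by (simp add: abs_le_iff)
qed

lemma integral_vote_drift_ge:
  "-1 + (W - 1) * competence_moment \<nu>0 k - 6 * \<sigma> \<le> (\<integral>x. vote_drift W k x \<partial>pair_law \<nu>0 W \<sigma>)"
proof -
  define F where "F x = pair_density W \<sigma> x * vote_drift W k x" for x
  have F_int: "integrable (\<nu>0 \<Otimes>\<^sub>M lborel) F"
    using integrable_vote_drift[of k] unfolding pair_law_eq_density F_def
    by (subst (asm) integrable_density) (auto simp: pair_density_nonneg)
  have bias_int: "integrable \<nu>0 (\<lambda>p. 2 * p - 1)"
    by (rule integrable_bounded_on_unit_interval[where B=1]) auto
  have lower_int: "integrable \<nu>0 (\<lambda>p. (2 * p - 1) + (W - 1) * (p ^ k * (2 * p - 1)) - 6 * \<sigma>)"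
    using bias_int integrable_competence[of k] by auto
  have "-1 \<le> (\<integral>p. 2 * p - 1 \<partial>\<nu>0)"
    using integral_mono_AE[OF integrable_const bias_int, of "-1"] AE_unit_interval prob_space
    by (auto elim: eventually_mono)
  then have "-1 + (W - 1) * competence_moment \<nu>0 k - 6 * \<sigma>
      \<le> (\<integral>p. (2 * p - 1) + (W - 1) * (p ^ k * (2 * p - 1)) - 6 * \<sigma> \<partial>\<nu>0)"
    using bias_int integrable_competence[of k] prob_space by (simp add: competence_moment_def)
  also have "\<dots> \<le> (\<integral>p. \<integral>e. F (p, e) \<partial>lborel \<partial>\<nu>0)"
    using cond_vote_drift_ge
    by (intro integral_mono_AE lower_int integrable_fst' F_int eventually_mono[OF AE_unit_interval])
      (auto simp: F_def algebra_simps)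
  also have "\<dots> = integral\<^sup>L (\<nu>0 \<Otimes>\<^sub>M lborel) F"
    by (rule integral_fst'[OF F_int])
  also have "\<dots> = (\<integral>x. vote_drift W k x \<partial>pair_law \<nu>0 W \<sigma>)"
    unfolding pair_law_eq_density F_def by (subst integral_density) (auto simp: pair_density_nonneg)
  finally show ?thesis .
qed

end

section \<open>Weighted majority votes\<close>

lemma prob_weighted_vote_ge:
  fixes w p :: "nat \<Rightarrow> real"
  assumes w: "\<And>i. i < n \<Longrightarrow> \<bar>w i\<bar> \<le> B" and p: "\<And>i. i < n \<Longrightarrow> 0 \<le> p i \<and> p i \<le> 1"
    and B: "B > 0" and drift: "0 \<le> (\<Sum>i<n. w i * (2 * p i - 1))"
  shows "1 - exp (-2 * (\<Sum>i<n. w i * (2 * p i - 1))\<^sup>2 / (n * (2 * B)\<^sup>2))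
    \<le> measure_pmf.prob (Pi_pmf {..<n} False (\<lambda>i. bernoulli_pmf (p i)))
         {x. 0 < (\<Sum>i<n. w i * (if x i then 1 else -1))}"
proof (cases "n = 0")
  case False
  define Q where "Q = Pi_pmf {..<n} False (\<lambda>i. bernoulli_pmf (p i))"
  define X where "X i x = w i * (if x i then 1 else -1 :: real)" for i x
  define S where "S = (\<Sum>i<n. w i * (2 * p i - 1))"
  have mean: "measure_pmf.expectation Q (X i) = w i * (2 * p i - 1)" if i: "i < n" for i
  proof -
    have "measure_pmf.expectation Q (X i)
        = measure_pmf.expectation (map_pmf (\<lambda>x. x i) Q) (\<lambda>b. w i * (if b then 1 else -1 :: real))"
      unfolding X_def by simp
    also have "map_pmf (\<lambda>x. x i) Q = bernoulli_pmf (p i)"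
      unfolding Q_def using i by (subst Pi_pmf_component) auto
    finally show ?thesis
      using p[OF i] by (simp add: algebra_simps)
  qed
  interpret Hoeffding_ineq Q "{..<n}" X "\<lambda>_. -B" "\<lambda>_. B" "\<Sum>i<n. measure_pmf.expectation Q (X i)"
  proof unfold_locales
    show "prob_space.indep_vars Q (\<lambda>_. borel) X {..<n}"
      unfolding X_def Q_def
      by (rule prob_space.indep_vars_compose2[OF measure_pmf.prob_space_axioms indep_vars_Pi_pmf]) auto
    show "AE x in Q. X i x \<in> {-B..B}" if "i \<in> {..<n}" for i
      using w[of i] that by (intro AE_I2) (auto simp: X_def abs_le_iff)
  qed auto
  have "measure_pmf.prob Q {x \<in> space Q. (\<Sum>i<n. X i x) \<le> S - S}
      \<le> exp (-2 * S\<^sup>2 / (\<Sum>i<n. (B - - B)\<^sup>2))"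
    using Hoeffding_ineq_le[OF drift[folded S_def]] B False
    by (simp add: mean S_def sum_pos)
  then have "measure_pmf.prob Q {x. (\<Sum>i<n. X i x) \<le> 0} \<le> exp (-2 * S\<^sup>2 / (n * (2 * B)\<^sup>2))"
    by simp
  moreover have "measure_pmf.prob Q {x. 0 < (\<Sum>i<n. X i x)} = 1 - measure_pmf.prob Q {x. (\<Sum>i<n. X i x) \<le> 0}"
    by (subst measure_pmf.prob_compl[symmetric]) (auto intro!: arg_cong[where f="measure_pmf.prob Q"])
  ultimately show ?thesis
    unfolding Q_def X_def S_def by linarith
qed simp

lemma weighted_vote_tendsto_1:
  fixes w p :: "nat \<Rightarrow> real" and B d :: real
  assumes w: "\<And>i. \<bar>w i\<bar> \<le> B" and p: "\<And>i. 0 \<le> p i \<and> p i \<le> 1" and B: "B > 0" and d: "d > 0"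
    and drift: "eventually (\<lambda>n. n * d < (\<Sum>i<n. w i * (2 * p i - 1))) sequentially"
  shows "(\<lambda>n. measure_pmf.prob (Pi_pmf {..<n} False (\<lambda>i. bernoulli_pmf (p i)))
      {x. 0 < (\<Sum>i<n. w i * (if x i then 1 else -1))}) \<longlonglongrightarrow> 1"
proof -
  define q where "q = exp (- (d\<^sup>2 / (2 * B\<^sup>2)))"
  have q: "0 < q" "q < 1"
    using d B by (auto simp: q_def)
  have lower: "1 - q ^ n \<le> measure_pmf.prob (Pi_pmf {..<n} False (\<lambda>i. bernoulli_pmf (p i)))
      {x. 0 < (\<Sum>i<n. w i * (if x i then 1 else -1))}"
    if "n * d < (\<Sum>i<n. w i * (2 * p i - 1))" for n
  proof -
    define S where "S = (\<Sum>i<n. w i * (2 * p i - 1))"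
    have "n > 0" using that d by (cases n) auto
    have "0 \<le> n * d" using d by simp
    then have "(n * d)\<^sup>2 \<le> S\<^sup>2"
      using that unfolding S_def by (intro power_mono) auto
    then have "-2 * S\<^sup>2 / (n * (2 * B)\<^sup>2) \<le> -2 * (n * d)\<^sup>2 / (n * (2 * B)\<^sup>2)"
      using B \<open>n > 0\<close> by (intro divide_right_mono) auto
    also have "\<dots> = n * - (d\<^sup>2 / (2 * B\<^sup>2))"
      using B \<open>n > 0\<close> by (simp add: field_simps power2_eq_square)
    finally have "exp (-2 * S\<^sup>2 / (n * (2 * B)\<^sup>2)) \<le> q ^ n"
      by (simp add: q_def exp_of_nat_mult[symmetric])
    moreover have "0 \<le> S"
      using that \<open>0 \<le> n * d\<close> unfolding S_def by linarith
    then have "1 - exp (-2 * S\<^sup>2 / (n * (2 * B)\<^sup>2)) \<le> measure_pmf.prob (Pi_pmf {..<n} False (\<lambda>i. bernoulli_pmf (p i)))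
        {x. 0 < (\<Sum>i<n. w i * (if x i then 1 else -1))}"
      unfolding S_def by (rule prob_weighted_vote_ge[OF w p B])
    ultimately show ?thesis
      by linarith
  qed
  have below: "eventually (\<lambda>n. 1 - q ^ n \<le> measure_pmf.prob (Pi_pmf {..<n} False (\<lambda>i. bernoulli_pmf (p i)))
      {x. 0 < (\<Sum>i<n. w i * (if x i then 1 else -1))}) sequentially"
    using drift by (rule eventually_mono) (rule lower)
  have lim: "(\<lambda>n. 1 - q ^ n) \<longlonglongrightarrow> 1"
    using tendsto_diff[OF tendsto_const LIMSEQ_power_zero[of q]] q by simp
  show ?thesis
    by (rule tendsto_sandwich[OF below _ lim tendsto_const]) simp
qed

lemma CJP_weightedI:
  fixes d :: real
  assumes W: "W > 1" and adm: "\<And>i. s i \<in> admissible_pairs W" and d: "d > 0"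
    and drift: "eventually (\<lambda>n. n * d < (\<Sum>i<n. vote_drift W k (s i))) sequentially"
  shows "s \<in> CJP_weighted W k"
  unfolding CJP_weighted_def weighted_majority_prob_def
proof (intro CollectI weighted_vote_tendsto_1[where B="2 * W" and d=d])
  show "\<bar>weight W k (s i)\<bar> \<le> 2 * W" for i
    using abs_weight_le[OF W adm] .
  show "0 \<le> fst (s i) \<and> fst (s i) \<le> 1" for i
    using adm[of i] by (simp add: admissible_pairs_def)
  show "eventually (\<lambda>n. n * d < (\<Sum>i<n. weight W k (s i) * (2 * fst (s i) - 1))) sequentially"
    using drift by (simp add: vote_drift_def)
qed (use W d in auto)

text \<open>Unfolding the product pmf into a finite sum exposes the measurable dependence on \<open>s\<close>.\<close>
lemma weighted_majority_prob_eq_sum: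
  "weighted_majority_prob W k s n =
     (\<Sum>x\<in>PiE_dflt {..<n} False (\<lambda>_. UNIV).
        of_bool (0 < (\<Sum>i<n. weight W k (s i) * (if x i then 1 else -1))) *
        (\<Prod>i<n. pmf (bernoulli_pmf (fst (s i))) (x i)))"
proof -
  define Q where "Q = Pi_pmf {..<n} False (\<lambda>i. bernoulli_pmf (fst (s i)))"
  define A where "A = {x. 0 < (\<Sum>i<n. weight W k (s i) * (if x i then 1 else -1 :: real))}"
  define D where "D = PiE_dflt {..<n} False (\<lambda>_. UNIV :: bool set)"
  have D: "finite D" "set_pmf Q \<subseteq> D"
    unfolding D_def Q_def using set_Pi_pmf_subset[of "{..<n}" False]
    by auto (auto simp: PiE_dflt_def)
  have "weighted_majority_prob W k s n = measure_pmf.prob Q (A \<inter> D)"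
    unfolding weighted_majority_prob_def Q_def[symmetric] A_def[symmetric]
    using D(2) measure_Int_set_pmf[of Q A] measure_Int_set_pmf[of Q "A \<inter> D"]
    by (simp add: Int_assoc Int_absorb1)
  also have "\<dots> = (\<Sum>x\<in>D. of_bool (x \<in> A) * pmf Q x)"
    using D sum.inter_restrict[of D "pmf Q" A]
    by (subst measure_measure_pmf_finite) (auto simp: Int_commute intro!: sum.cong)
  also have "\<dots> = (\<Sum>x\<in>D. of_bool (x \<in> A) * (\<Prod>i<n. pmf (bernoulli_pmf (fst (s i))) (x i)))"
    by (intro sum.cong refl) (auto simp: Q_def D_def PiE_dflt_def pmf_Pi)
  finally show ?thesis
    unfolding A_def D_def by simp
qed

lemma sets_CJP_weighted: "CJP_weighted W k \<in> sets (PiM UNIV (\<lambda>_. borel \<Otimes>\<^sub>M borel))"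
proof -
  have pmf_bernoulli: "pmf (bernoulli_pmf p) b = (if b then min 1 (max 0 p) else 1 - min 1 (max 0 p))" for p b
    by (simp add: bernoulli_pmf.rep_eq)
  have [measurable]: "(\<lambda>s. weighted_majority_prob W k s n) \<in> borel_measurable (PiM UNIV (\<lambda>_. borel \<Otimes>\<^sub>M borel))" for n
    unfolding weighted_majority_prob_eq_sum pmf_bernoulli weight_def by measurable
  have "{s \<in> space (PiM UNIV (\<lambda>_. borel \<Otimes>\<^sub>M borel)). weighted_majority_prob W k s \<longlonglongrightarrow> 1}
      \<in> sets (PiM UNIV (\<lambda>_. borel \<Otimes>\<^sub>M borel))"
    by measurable
  then show ?thesis
    by (simp add: CJP_weighted_def space_PiM space_pair_measure)
qed

section \<open>Independent sequences of voters\<close>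

lemma (in product_prob_space) indep_vars_components:
  assumes "J \<subseteq> I" "finite J" "J \<noteq> {}"
  shows "P.indep_vars M (\<lambda>i \<omega>. \<omega> i) J"
proof (subst P.indep_vars_iff_distr_eq_PiM'[OF assms(3)])
  show "(\<lambda>\<omega>. \<omega> i) \<in> measurable (PiM I M) (M i)" if "i \<in> J" for i
    using that assms(1) by (intro measurable_component_singleton) auto
  have "PiM J (\<lambda>i. distr (PiM I M) (M i) (\<lambda>\<omega>. \<omega> i)) = PiM J M"
    using assms(1) by (intro PiM_cong) (auto simp: PiM_component)
  then show "distr (PiM I M) (PiM J M) (\<lambda>\<omega>. \<lambda>i\<in>J. \<omega> i) = PiM J (\<lambda>i. distr (PiM I M) (M i) (\<lambda>\<omega>. \<omega> i))"
    using distr_PiM_restrict_finite[OF assms(2,1)] by simp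
qed

lemma (in prob_space) prob_PiM_sum_le:
  fixes f :: "'a \<Rightarrow> real" and B d :: real
  assumes f [measurable]: "f \<in> borel_measurable M" and bound: "AE x in M. \<bar>f x\<bar> \<le> B" and B: "B > 0"
    and d: "d \<le> expectation f"
  shows "prob_space.prob (PiM UNIV (\<lambda>_ :: nat. M)) {\<omega> \<in> space (PiM UNIV (\<lambda>_. M)). (\<Sum>i<n. f (\<omega> i)) \<le> n * d}
    \<le> exp (- ((expectation f - d)\<^sup>2 / (2 * B\<^sup>2))) ^ n"
proof (cases "n = 0")
  case False
  interpret \<Omega>: product_prob_space "\<lambda>_ :: nat. M" UNIV
    by (intro product_prob_spaceI prob_space_axioms)
  have component: "distr (PiM UNIV (\<lambda>_. M)) M (\<lambda>\<omega>. \<omega> i) = M" for i :: nat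
    by (rule \<Omega>.PiM_component) simp
  have distr_f: "distr (PiM UNIV (\<lambda>_. M)) borel (\<lambda>\<omega>. f (\<omega> i)) = distr M borel f" for i :: nat
    using distr_distr[of f M borel "\<lambda>\<omega>. \<omega> i" "PiM UNIV (\<lambda>_. M)"] by (simp add: component comp_def)
  have expectation_f: "\<Omega>.expectation (\<lambda>\<omega>. f (\<omega> i)) = expectation f" for i :: nat
    using integral_distr[of "\<lambda>\<omega>. \<omega> i" "PiM UNIV (\<lambda>_. M)" M f] by (simp add: component)
  interpret Hoeffding_ineq_iid "PiM UNIV (\<lambda>_. M)" "{..<n}" "\<lambda>i \<omega>. f (\<omega> i)" "\<lambda>\<omega>. f (\<omega> 0)" "-B" B
    "\<Omega>.expectation (\<lambda>\<omega>. f (\<omega> 0))"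
  proof unfold_locales
    show "\<Omega>.indep_vars (\<lambda>_. borel) (\<lambda>i \<omega>. f (\<omega> i)) {..<n}"
      using \<Omega>.indep_vars_compose2[OF \<Omega>.indep_vars_components[of "{..<n}"], of "\<lambda>_. f" "\<lambda>_. borel"] False
      by (simp add: lessThan_empty_iff)
    show "AE \<omega> in PiM UNIV (\<lambda>_. M). f (\<omega> 0) \<in> {-B..B}"
      using bound by (intro AE_PiM_component) (auto simp: abs_le_iff prob_space_axioms)
  qed (simp_all add: distr_f)
  have "\<Omega>.prob {\<omega> \<in> space (PiM UNIV (\<lambda>_. M)). (\<Sum>i<n. f (\<omega> i)) \<le> n * expectation f - n * (expectation f - d)}
      \<le> exp (-2 * (n * (expectation f - d))\<^sup>2 / (n * (B - - B)\<^sup>2))"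
    using Hoeffding_ineq_le[of "n * (expectation f - d)"] d B False
    by (simp add: expectation_f lessThan_empty_iff)
  also have "-2 * (n * (expectation f - d))\<^sup>2 / (n * (B - - B)\<^sup>2) = n * - ((expectation f - d)\<^sup>2 / (2 * B\<^sup>2))"
    using B False by (simp add: field_simps power2_eq_square)
  finally show ?thesis
    by (simp add: algebra_simps exp_of_nat_mult[symmetric])
qed (simp add: prob_space.prob_le_1 prob_space_PiM prob_space_axioms)

lemma (in prob_space) AE_PiM_eventually_sum_gt:
  fixes f :: "'a \<Rightarrow> real" and B d :: real
  assumes f [measurable]: "f \<in> borel_measurable M" and bound: "AE x in M. \<bar>f x\<bar> \<le> B" and B: "B > 0"
    and d: "d < expectation f"
  shows "AE \<omega> in PiM UNIV (\<lambda>_. M). eventually (\<lambda>n. real n * d < (\<Sum>i<n. f (\<omega> i))) sequentially"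
proof -
  interpret \<Omega>: prob_space "PiM UNIV (\<lambda>_ :: nat. M)"
    by (intro prob_space_PiM prob_space_axioms)
  define A where "A n = {\<omega> \<in> space (PiM UNIV (\<lambda>_. M)). (\<Sum>i<n. f (\<omega> i)) \<le> real n * d}" for n
  have A_sets [measurable]: "A n \<in> sets (PiM UNIV (\<lambda>_. M))" for n
    unfolding A_def by measurable
  define q where "q = exp (- ((expectation f - d)\<^sup>2 / (2 * B\<^sup>2)))"
  have "0 < q" "q < 1"
    using d B by (auto simp: q_def)
  then have "summable (\<lambda>n. \<Omega>.prob (A n))"
    using prob_PiM_sum_le[OF f bound B less_imp_le[OF d]] unfolding A_def q_def[symmetric]
    by (intro summable_comparison_test'[OF summable_geometric, of q 0]) auto
  then have "AE \<omega> in PiM UNIV (\<lambda>_. M). eventually (\<lambda>n. \<omega> \<in> space (PiM UNIV (\<lambda>_. M)) - A n) sequentially"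
    by (intro borel_cantelli_AE1) (auto simp: \<Omega>.emeasure_eq_measure)
  then show ?thesis
    by (rule eventually_mono) (auto elim!: eventually_mono simp: A_def)
qed

section \<open>The Condorcet property almost surely\<close>

lemma emeasure_eq_1_if_AE_absolutely_continuous:
  assumes \<mu>: "prob_space \<mu>" "sets \<mu> = sets \<nu>" "absolutely_continuous \<nu> \<mu>"
    and A: "A \<in> sets \<nu>" "AE x in \<nu>. x \<in> A"
  shows "emeasure \<mu> A = 1"
proof -
  have "AE x in \<mu>. x \<in> A"
    using \<mu>(2,3) A(2) by (intro absolutely_continuous_AE[of \<mu> \<nu>]) auto
  then show ?thesis
    using prob_space.AE_in_set_eq_1[OF \<mu>(1)] A(1) \<mu>(2)
    by (simp add: finite_measure.emeasure_eq_measure[OF prob_space.finite_measure[OF \<mu>(1)]])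
qed

context truncated_pair_law
begin

lemma sets_mu0: "sets (mu0 \<nu>0 W \<sigma>) = sets (PiM UNIV (\<lambda>_. borel \<Otimes>\<^sub>M borel))"
  unfolding mu0_def by (intro sets_PiM_cong) (auto simp: sets_pair_law)

lemma AE_mu0_CJP_weighted:
  assumes m: "0 < (\<integral>x. vote_drift W k x \<partial>pair_law \<nu>0 W \<sigma>)"
  shows "AE s in mu0 \<nu>0 W \<sigma>. s \<in> CJP_weighted W k"
proof -
  interpret L: prob_space "pair_law \<nu>0 W \<sigma>"
    by (rule prob_space_pair_law)
  define d where "d = L.expectation (vote_drift W k) / 2"
  have d: "0 < d" "d < L.expectation (vote_drift W k)"
    using m by (auto simp: d_def)
  have "AE s in mu0 \<nu>0 W \<sigma>. \<forall>i. s i \<in> admissible_pairs W"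
    unfolding mu0_def AE_all_countable
    by (intro allI AE_PiM_component) (auto simp: prob_space_pair_law AE_pair_law_admissible)
  moreover have "AE s in mu0 \<nu>0 W \<sigma>. eventually (\<lambda>n. real n * d < (\<Sum>i<n. vote_drift W k (s i))) sequentially"
    unfolding mu0_def using d(2) W_gt_1
    by (intro L.AE_PiM_eventually_sum_gt[where B="2 * W"] measurable_vote_drift(2)
        eventually_mono[OF AE_pair_law_admissible] abs_vote_drift_le) auto
  ultimately show ?thesis
    by eventually_elim (intro CJP_weightedI[OF W_gt_1 _ d(1)]; auto)
qed

lemma emeasure_CJP_weighted_eq_1:
  assumes c: "4 \<le> (W - 1) * competence_moment \<nu>0 k" "24 * \<sigma> \<le> (W - 1) * competence_moment \<nu>0 k"
    and \<mu>: "prob_space \<mu>" "sets \<mu> = sets (mu0 \<nu>0 W \<sigma>)" "absolutely_continuous (mu0 \<nu>0 W \<sigma>) \<mu>"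
  shows "emeasure \<mu> (CJP_weighted W k) = 1"
proof (rule emeasure_eq_1_if_AE_absolutely_continuous[OF \<mu>])
  show "CJP_weighted W k \<in> sets (mu0 \<nu>0 W \<sigma>)"
    unfolding sets_mu0 by (rule sets_CJP_weighted)
  have "0 < (\<integral>x. vote_drift W k x \<partial>pair_law \<nu>0 W \<sigma>)"
    using integral_vote_drift_ge[of k] c by linarith
  then show "AE s in mu0 \<nu>0 W \<sigma>. s \<in> CJP_weighted W k"
    by (rule AE_mu0_CJP_weighted)
qed

end

theorem theorem3:
  fixes \<nu>0 :: "real measure"
  assumes "prob_space \<nu>0"
    and "sets \<nu>0 = sets borel"
    and "emeasure \<nu>0 {0..1} = 1"
    and "emeasure \<nu>0 {1/2<..1} > 0"
  shows "\<exists>k::nat. k \<ge> 1 \<and> (\<exists>W0 R0::real. \<forall>W \<sigma>::real.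
           W > 1 \<and> \<sigma> > 0 \<and> W \<ge> W0 \<and> (W - 1) / \<sigma> \<ge> R0 \<longrightarrow>
           (\<forall>\<mu> :: (nat \<Rightarrow> real \<times> real) measure.
              prob_space \<mu> \<and> sets \<mu> = sets (mu0 \<nu>0 W \<sigma>) \<and>
              absolutely_continuous (mu0 \<nu>0 W \<sigma>) \<mu> \<longrightarrow>
              emeasure \<mu> (CJP_weighted W k) = 1))"
proof -
  interpret unit_interval_prob_space \<nu>0
    using assms(1-3) by (simp add: unit_interval_prob_space_def unit_interval_prob_space_axioms_def)
  obtain k where k: "k \<ge> 1" "competence_moment \<nu>0 k > 0"
    using ex_competence_moment_pos[OF assms(4)] by blast
  define c where "c = competence_moment \<nu>0 k"
  have "emeasure \<mu> (CJP_weighted W k) = 1"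
    if W: "W > 1" "W \<ge> 1 + 4 / c" and \<sigma>: "\<sigma> > 0" "(W - 1) / \<sigma> \<ge> max 2 (24 / c)"
      and \<mu>: "prob_space \<mu>" "sets \<mu> = sets (mu0 \<nu>0 W \<sigma>)" "absolutely_continuous (mu0 \<nu>0 W \<sigma>) \<mu>"
    for W \<sigma> :: real and \<mu>
  proof -
    have "2 * \<sigma> \<le> W - 1" and c_large: "4 \<le> (W - 1) * c" "24 * \<sigma> \<le> (W - 1) * c"
      using W \<sigma> k(2) by (auto simp: c_def field_simps)
    then interpret truncated_pair_law \<nu>0 W \<sigma>
      using W \<sigma> by unfold_locales auto
    show ?thesis
      using emeasure_CJP_weighted_eq_1[OF c_large[unfolded c_def] \<mu>] .
  qed
  with k(1) show ?thesis
    by (intro exI[of _ k] conjI exI[of _ "1 + 4 / c"] exI[of _ "max 2 (24 / c)"]) auto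
qed

end
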